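(* Let $n=1$ and $\Phi(x,y)=\phi(x-y)$. Let $f:\mathbb R\to\mathbb R$ (finite-valued) be left $\Phi$-convex (equivalently, $f(x)=\sup_y\phi(x-y)-g(y)$ for some proper lsc convex $g:\mathbb R\to\overline{\mathbb R}$). Then $f$ is a-strongly convex.
   Context: Standing assumption (here with $n=1$): $\phi:\mathbb R\to\mathbb R$ is convex, finite-valued, differentiable and strictly convex, super-coercive; $\phi^*$ has the same properties and $(\phi^* )'=(\phi')^{-1}$. Left $\Phi$-convex: $f=\sup_{i\in I}\Phi(\cdot,y_i)-\beta_i$ for some family $(y_i,\beta_i)\in\mathbb R\times\overline{\mathbb R}$. A proper lsc $f$ is a-strongly convex if for every $(\bar x,\bar v)\in\operatorname{graph}\partial f$ (limiting subdifferential): $f(x)\ge f(\bar x)+\phi(x-\bar x+(\phi^* )'(\bar v))-\phi((\phi^* )'(\bar v))$ for all $x\in\mathbb R$. *)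

theory Defs
  imports "HOL-Analysis.Analysis" "HOL-Library.Extended_Real"
begin

definition strictly_convex :: "(real \<Rightarrow> real) \<Rightarrow> bool" where
  "strictly_convex g \<longleftrightarrow>
     (\<forall>x y t. x \<noteq> y \<longrightarrow> 0 < t \<longrightarrow> t < 1 \<longrightarrow>
        g ((1 - t) * x + t * y) < (1 - t) * g x + t * g y)"

definition super_coercive :: "(real \<Rightarrow> real) \<Rightarrow> bool" where
  "super_coercive g \<longleftrightarrow> filterlim (\<lambda>x. g x / \<bar>x\<bar>) at_top at_infinity"

definition fconj :: "(real \<Rightarrow> real) \<Rightarrow> real \<Rightarrow> real" where
  "fconj g v = (SUP x. v * x - g x)"

definition standing_phi :: "(real \<Rightarrow> real) \<Rightarrow> bool" where
  "standing_phi g \<longleftrightarrow>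
     convex_on UNIV g \<and> (\<forall>x. g differentiable (at x)) \<and> strictly_convex g \<and> super_coercive g \<and>
     (\<forall>v. bdd_above (range (\<lambda>x. v * x - g x))) \<and>
     convex_on UNIV (fconj g) \<and> (\<forall>v. fconj g differentiable (at v)) \<and>
     strictly_convex (fconj g) \<and> super_coercive (fconj g) \<and>
     (\<forall>v. deriv g (deriv (fconj g) v) = v) \<and> (\<forall>x. deriv (fconj g) (deriv g x) = x)"

definition left_Phi_convex :: "(real \<Rightarrow> real) \<Rightarrow> (real \<Rightarrow> real) \<Rightarrow> bool" where
  "left_Phi_convex g f \<longleftrightarrow>
     (\<exists>(I :: (real \<times> ereal) set). \<forall>x. ereal (f x) = (SUP p\<in>I. ereal (g (x - fst p)) - snd p))"

definition frechet_subdiff :: "(real \<Rightarrow> real) \<Rightarrow> real \<Rightarrow> real set" where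
  "frechet_subdiff f x = {v. \<forall>e>0. \<exists>d>0. \<forall>z. \<bar>z - x\<bar> < d \<longrightarrow>
       f z \<ge> f x + v * (z - x) - e * \<bar>z - x\<bar>}"

definition limiting_subdiff :: "(real \<Rightarrow> real) \<Rightarrow> real \<Rightarrow> real set" where
  "limiting_subdiff f x = {v. \<exists>xs vs. xs \<longlonglongrightarrow> x \<and> (\<lambda>k. f (xs k)) \<longlonglongrightarrow> f x \<and>
       vs \<longlonglongrightarrow> v \<and> (\<forall>k. vs k \<in> frechet_subdiff f (xs k))}"

definition a_strongly_convex :: "(real \<Rightarrow> real) \<Rightarrow> (real \<Rightarrow> real) \<Rightarrow> bool" where
  "a_strongly_convex g f \<longleftrightarrow>
     (\<forall>xb vb. vb \<in> limiting_subdiff f xb \<longrightarrow>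
        (\<forall>x. f x \<ge> f xb + g (x - xb + deriv (fconj g) vb) - g (deriv (fconj g) vb)))"

end

theory Submission
  imports Defs
begin

text \<open>
  Let \<open>z = (\<phi>\<^sup>*)'(v)\<close>, so that \<open>\<phi>'(z) = v\<close>. The claim says that \<open>a\<close> minimises
  \<open>f - \<phi>(\<cdot> - (a - z))\<close>. Since \<open>\<phi>'\<close> is increasing, \<open>t \<mapsto> \<phi>(H + t) - \<phi>(h + t)\<close> is
  nondecreasing for \<open>h \<le> H\<close>; hence every piece \<open>\<phi>(\<cdot> - y) - b\<close> of \<open>f\<close> with \<open>a - y \<ge> z\<close> grows
  on \<open>[a, a + H]\<close> at least as much as \<open>\<phi>(\<cdot> - (a - z))\<close>. A Frechet subgradient \<open>v\<close> at \<open>a\<close>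
  forces the pieces that are almost active at \<open>a + h\<close> to satisfy \<open>a - y \<ge> z - o(1)\<close> as
  \<open>h \<rightarrow> 0\<^sup>+\<close>, and letting \<open>h \<rightarrow> 0\<^sup>+\<close> gives the claim to the right of \<open>a\<close>; the left side
  follows by reflection. For limiting subgradients one passes to the limit, using that
  \<open>(\<phi>\<^sup>*)' = (\<phi>')\<^sup>-\<^sup>1\<close> is continuous.
\<close>

definition Phi_envelope :: "(real \<Rightarrow> real) \<Rightarrow> (real \<times> real) set \<Rightarrow> (real \<Rightarrow> real) \<Rightarrow> bool" where
  "Phi_envelope \<phi> S f \<longleftrightarrow>
     (\<forall>x y b. (y, b) \<in> S \<longrightarrow> \<phi> (x - y) - b \<le> f x) \<and>
     (\<forall>x \<epsilon>. 0 < \<epsilon> \<longrightarrow> (\<exists>y b. (y, b) \<in> S \<and> f x - \<epsilon> < \<phi> (x - y) - b))"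

text \<open>Pieces with \<open>\<beta> = \<infinity>\<close> contribute nothing, and \<open>\<beta> = -\<infinity>\<close> cannot occur since \<open>f\<close> is finite.\<close>

lemma left_Phi_convex_imp_envelope:
  assumes "left_Phi_convex \<phi> f"
  obtains S where "Phi_envelope \<phi> S f"
proof -
  obtain I :: "(real \<times> ereal) set" where I: "\<And>x. ereal (f x) = (SUP p\<in>I. ereal (\<phi> (x - fst p)) - snd p)"
    using assms unfolding left_Phi_convex_def by blast
  define S where "S = {(y, b). (y, ereal b) \<in> I}"
  have upper: "ereal (\<phi> (x - fst p)) - snd p \<le> ereal (f x)" if "p \<in> I" for x p
    unfolding I by (rule SUP_upper[OF that])
  have "\<exists>y b. (y, b) \<in> S \<and> f x - \<epsilon> < \<phi> (x - y) - b" if "0 < \<epsilon>" for x \<epsilon>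
  proof -
    have "ereal (f x - \<epsilon>) < ereal (f x)" using that by simp
    then obtain y q where p: "(y, q) \<in> I" and lt: "ereal (f x - \<epsilon>) < ereal (\<phi> (x - y)) - q"
      unfolding I[of x] by (auto simp: less_SUP_iff)
    show ?thesis
    proof (cases q)
      case (real b)
      with p lt show ?thesis unfolding S_def by force
    qed (use lt upper[OF p, of x] in auto)
  qed
  moreover have "\<phi> (x - y) - b \<le> f x" if "(y, b) \<in> S" for x y b
    using upper[of "(y, ereal b)" x] that unfolding S_def by simp
  ultimately have "Phi_envelope \<phi> S f"
    unfolding Phi_envelope_def by blast
  then show thesis by (rule that)
qed

lemma Phi_envelope_reflect:
  assumes "Phi_envelope \<phi> S f"
  shows "Phi_envelope (\<lambda>t. \<phi> (- t)) ((\<lambda>(y, b). (- y, b)) ` S) (\<lambda>t. f (- t))"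
  unfolding Phi_envelope_def
proof (intro conjI allI impI)
  fix x y b :: real assume "(y, b) \<in> (\<lambda>(y, b). (- y, b)) ` S"
  then have "(- y, b) \<in> S" by force
  with assms have "\<phi> (- x - - y) - b \<le> f (- x)"
    unfolding Phi_envelope_def by blast
  then show "\<phi> (- (x - y)) - b \<le> f (- x)" by simp
next
  fix x \<epsilon> :: real assume "0 < \<epsilon>"
  with assms obtain y b where "(y, b) \<in> S" "f (- x) - \<epsilon> < \<phi> (- x - y) - b"
    unfolding Phi_envelope_def by blast
  then show "\<exists>y b. (y, b) \<in> (\<lambda>(y, b). (- y, b)) ` S \<and> f (- x) - \<epsilon> < \<phi> (- (x - y)) - b"
    by (intro exI[of _ "- y"] exI[of _ b]) force
qed

lemma frechet_subdiff_reflect: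
  assumes "v \<in> frechet_subdiff f a"
  shows "- v \<in> frechet_subdiff (\<lambda>t. f (- t)) (- a)"
  unfolding frechet_subdiff_def
proof (intro CollectI allI impI)
  fix e :: real
  assume "0 < e"
  with assms obtain \<delta> where "0 < \<delta>" and \<delta>: "\<forall>w. \<bar>w - a\<bar> < \<delta> \<longrightarrow> f a + v * (w - a) - e * \<bar>w - a\<bar> \<le> f w"
    unfolding frechet_subdiff_def by blast
  have "f (- (- a)) + - v * (w - - a) - e * \<bar>w - - a\<bar> \<le> f (- w)" if "\<bar>w - - a\<bar> < \<delta>" for w
    using \<delta>[rule_format, of "- w"] that by (simp add: abs_minus_commute algebra_simps)
  with \<open>0 < \<delta>\<close> show "\<exists>\<delta>>0. \<forall>w. \<bar>w - - a\<bar> < \<delta> \<longrightarrow>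
      f (- (- a)) + - v * (w - - a) - e * \<bar>w - - a\<bar> \<le> f (- w)"
    by blast
qed

lemma above_tangent_mono_deriv:
  fixes \<phi> d :: "real \<Rightarrow> real"
  assumes der: "\<And>x. (\<phi> has_real_derivative d x) (at x)" and "mono d"
  shows "\<phi> x + d x * (y - x) \<le> \<phi> y"
proof -
  have "convex_on UNIV \<phi>"
    by (rule convex_on_realI[where f' = d]) (use der \<open>mono d\<close> in \<open>auto simp: mono_def\<close>)
  then show ?thesis
    using convex_on_imp_above_tangent[of UNIV \<phi> x y "d x"] der[of x] by simp
qed

lemma increment_mono_shift:
  fixes \<phi> d :: "real \<Rightarrow> real"
  assumes der: "\<And>x. (\<phi> has_real_derivative d x) (at x)" and "mono d"
    and "h \<le> H" and "t \<le> s"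
  shows "\<phi> (H + t) - \<phi> (h + t) \<le> \<phi> (H + s) - \<phi> (h + s)"
proof -
  have shift: "((\<lambda>t. \<phi> (c + t)) has_real_derivative d (c + x)) (at x)" for c x
    using DERIV_shift[of \<phi> "d (x + c)" x c] der[of "x + c"] by (simp add: add.commute)
  have "(\<lambda>t. \<phi> (H + t) - \<phi> (h + t)) t \<le> (\<lambda>t. \<phi> (H + t) - \<phi> (h + t)) s"
  proof (rule DERIV_nonneg_imp_nondecreasing[OF \<open>t \<le> s\<close>])
    fix x
    have "d (h + x) \<le> d (H + x)" using \<open>mono d\<close> \<open>h \<le> H\<close> by (simp add: monoD)
    with DERIV_diff[OF shift[of H] shift[of h]]
    show "\<exists>y. ((\<lambda>t. \<phi> (H + t) - \<phi> (h + t)) has_real_derivative y) (at x) \<and> 0 \<le> y"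
      by force
  qed
  then show ?thesis by simp
qed

lemma tendsto_strict_mono_inverse:
  fixes d g :: "real \<Rightarrow> real"
  assumes "strict_mono d" and inv: "\<And>v. d (g v) = v" and lim: "(u \<longlongrightarrow> v) F"
  shows "((\<lambda>k. g (u k)) \<longlongrightarrow> g v) F"
proof (rule order_tendstoI)
  fix c assume "c < g v"
  then have "d c < v" using \<open>strict_mono d\<close> inv by (metis strict_mono_less)
  with lim have "eventually (\<lambda>k. d c < u k) F" by (rule order_tendstoD)
  then show "eventually (\<lambda>k. c < g (u k)) F"
    by eventually_elim (metis \<open>strict_mono d\<close> inv strict_mono_less)
next
  fix c assume "g v < c"
  then have "v < d c" using \<open>strict_mono d\<close> inv by (metis strict_mono_less)
  with lim have "eventually (\<lambda>k. u k < d c) F" by (rule order_tendstoD)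
  then show "eventually (\<lambda>k. g (u k) < c) F"
    by eventually_elim (metis \<open>strict_mono d\<close> inv strict_mono_less)
qed

lemma Phi_envelope_almost_active:
  assumes "Phi_envelope \<phi> S f"
  obtains Y B where "\<And>h. (Y h, B h) \<in> S"
    and "\<And>h. 0 < h \<Longrightarrow> f (a + h) - h\<^sup>2 < \<phi> (a + h - Y h) - B h"
proof -
  have "\<exists>y b. (y, b) \<in> S \<and> (0 < h \<longrightarrow> f (a + h) - h\<^sup>2 < \<phi> (a + h - y) - b)" for h :: real
  proof (cases "0 < h")
    case True
    then show ?thesis using assms unfolding Phi_envelope_def by (metis zero_less_power)
  next
    case False
    from assms obtain y b where "(y, b) \<in> S" unfolding Phi_envelope_def by (meson zero_less_one)
    with False show ?thesis by blast
  qed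
  then show thesis using that by metis
qed

lemma frechet_subdiff_eventually_right:
  assumes "v \<in> frechet_subdiff f a" and "0 < e"
  shows "\<forall>\<^sub>F h in at_right 0. f a + v * h - e * h \<le> f (a + h)"
proof -
  from assms obtain \<delta> where "0 < \<delta>"
    and \<delta>: "\<And>w. \<bar>w - a\<bar> < \<delta> \<Longrightarrow> f a + v * (w - a) - e * \<bar>w - a\<bar> \<le> f w"
    unfolding frechet_subdiff_def by blast
  have "f a + v * h - e * h \<le> f (a + h)" if "0 < h" "h < \<delta>" for h
    using \<delta>[of "a + h"] that by simp
  with \<open>0 < \<delta>\<close> show ?thesis
    unfolding eventually_at_right_field by blast
qed

text \<open>
  Here \<open>s h = a - y\<^sub>h\<close> is the offset of a piece almost active at \<open>a + h\<close>. Comparing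
  \<open>f(a + h) - f(a) < \<phi>(s h + h) - \<phi>(s h) + h\<^sup>2 \<le> h \<phi>'(s h + h) + h\<^sup>2\<close> with
  \<open>f(a + h) - f(a) \<ge> h \<phi>'(z) - o(h)\<close> bounds \<open>\<phi>'(s h + h)\<close> from below.
\<close>

lemma almost_active_offset_lower:
  fixes \<phi> d f s :: "real \<Rightarrow> real"
  assumes der: "\<And>x. (\<phi> has_real_derivative d x) (at x)" and "strict_mono d"
    and sub: "d z \<in> frechet_subdiff f a"
    and grow: "\<And>h. 0 < h \<Longrightarrow> f (a + h) - f a < \<phi> (s h + h) - \<phi> (s h) + h\<^sup>2"
    and "0 < \<delta>"
  shows "\<forall>\<^sub>F h in at_right 0. z - \<delta> < s h"
proof -
  have "mono d" using \<open>strict_mono d\<close> by (rule strict_mono_mono)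
  define c where "c = z - \<delta> / 2"
  define e where "e = (d z - d c) / 2"
  have "d c < d z" using \<open>strict_mono d\<close> \<open>0 < \<delta>\<close> unfolding c_def by (simp add: strict_mono_less)
  then have "0 < e" unfolding e_def by simp
  have small: "\<forall>\<^sub>F h in at_right 0. h < e \<and> h < \<delta> / 2"
    unfolding eventually_at_right_field using \<open>0 < e\<close> \<open>0 < \<delta>\<close>
    by (intro exI[of _ "min e (\<delta> / 2)"]) auto
  show ?thesis
    using frechet_subdiff_eventually_right[OF sub \<open>0 < e\<close>] small eventually_at_right_less
  proof eventually_elim
    case (elim h)
    have "\<phi> (s h + h) - \<phi> (s h) \<le> h * d (s h + h)"
      using above_tangent_mono_deriv[OF der \<open>mono d\<close>, of "s h + h" "s h"] by (simp add: algebra_simps)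
    with elim grow[of h] have "d z * h - e * h < h * d (s h + h) + h\<^sup>2"
      by linarith
    then have "h * (d z - e) < h * (d (s h + h) + h)"
      by (simp add: power2_eq_square right_diff_distrib distrib_left mult.commute)
    with elim have "d z - e < d (s h + h) + h" by simp
    moreover have "h < e" using elim by simp
    ultimately have "d c < d (s h + h)" unfolding e_def by (simp add: field_simps)
    then have "c < s h + h" using \<open>mono d\<close> by (meson monoD not_less)
    with elim show ?case unfolding c_def by simp
  qed
qed

lemma Phi_envelope_subgradient_right:
  fixes \<phi> d f :: "real \<Rightarrow> real"
  assumes der: "\<And>x. (\<phi> has_real_derivative d x) (at x)" and "strict_mono d"
    and env: "Phi_envelope \<phi> S f"
    and sub: "d z \<in> frechet_subdiff f a"
    and "0 < H"
  shows "f a + \<phi> (H + z) - \<phi> z \<le> f (a + H)"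
proof -
  have below: "\<phi> (x - y) - b \<le> f x" if "(y, b) \<in> S" for x y b
    using env that unfolding Phi_envelope_def by blast
  obtain Y B where piece: "\<And>h. (Y h, B h) \<in> S"
    and active: "\<And>h. 0 < h \<Longrightarrow> f (a + h) - h\<^sup>2 < \<phi> (a + h - Y h) - B h"
    using Phi_envelope_almost_active[OF env] by blast
  define s where "s h = a - Y h" for h
  have grow_small: "f (a + h) - f a < \<phi> (s h + h) - \<phi> (s h) + h\<^sup>2" if "0 < h" for h
    using active[OF that] below[OF piece[of h], of a] unfolding s_def by (simp add: algebra_simps)
  have grow_large: "f (a + h) - h\<^sup>2 + \<phi> (H + s h) - \<phi> (h + s h) \<le> f (a + H)" if "0 < h" for h
    using active[OF that] below[OF piece[of h], of "a + H"] unfolding s_def by (simp add: algebra_simps)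
  define m where "m h = min (s h) z" for h
  have m: "(m \<longlongrightarrow> z) (at_right 0)"
  proof (rule order_tendstoI)
    fix c assume "c < z"
    then show "\<forall>\<^sub>F h in at_right 0. c < m h"
      using almost_active_offset_lower[OF der \<open>strict_mono d\<close> sub grow_small, of "z - c"]
      unfolding m_def by (auto elim: eventually_mono)
  qed (simp add: m_def min.strict_coboundedI2)
  have "((\<lambda>h. f a + (d z - 1) * h - h\<^sup>2 + (\<phi> (H + m h) - \<phi> (h + m h)))
          \<longlongrightarrow> f a + (d z - 1) * 0 - 0\<^sup>2 + (\<phi> (H + z) - \<phi> (0 + z))) (at_right 0)"
    by (intro tendsto_intros isCont_tendsto_compose[OF DERIV_isCont[OF der]] m)
  then have "((\<lambda>h. f a + (d z - 1) * h - h\<^sup>2 + (\<phi> (H + m h) - \<phi> (h + m h)))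
          \<longlongrightarrow> f a + (\<phi> (H + z) - \<phi> z)) (at_right 0)"
    by simp
  moreover have "\<forall>\<^sub>F h in at_right 0. f a + (d z - 1) * h - h\<^sup>2 + (\<phi> (H + m h) - \<phi> (h + m h)) \<le> f (a + H)"
    using frechet_subdiff_eventually_right[OF sub zero_less_one] eventually_at_right_real[OF \<open>0 < H\<close>]
  proof eventually_elim
    case (elim h)
    have "\<phi> (H + m h) - \<phi> (h + m h) \<le> \<phi> (H + s h) - \<phi> (h + s h)"
      using increment_mono_shift[OF der strict_mono_mono[OF \<open>strict_mono d\<close>]] elim
      unfolding m_def by simp
    with elim grow_large[of h] show ?case by (simp add: algebra_simps)
  qed
  ultimately have "f a + (\<phi> (H + z) - \<phi> z) \<le> f (a + H)"
    by (rule tendsto_upperbound) simp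
  then show ?thesis by simp
qed

lemma Phi_envelope_subgradient:
  fixes \<phi> d f :: "real \<Rightarrow> real"
  assumes der: "\<And>x. (\<phi> has_real_derivative d x) (at x)" and mono: "strict_mono d"
    and env: "Phi_envelope \<phi> S f"
    and sub: "d z \<in> frechet_subdiff f a"
  shows "f a + \<phi> (x - a + z) - \<phi> z \<le> f x"
proof (cases x a rule: linorder_cases)
  case greater
  with Phi_envelope_subgradient_right[OF der mono env sub, of "x - a"] show ?thesis
    by (simp add: add.commute)
next
  case less
  have der': "((\<lambda>t. \<phi> (- t)) has_real_derivative - d (- t)) (at t)" for t
    using DERIV_mirror[of \<phi> "d (- t)" t] der[of "- t"] by simp
  have mono': "strict_mono (\<lambda>t. - d (- t))"
    using mono by (simp add: strict_mono_def)
  have sub': "(\<lambda>t. - d (- t)) (- z) \<in> frechet_subdiff (\<lambda>t. f (- t)) (- a)"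
    using frechet_subdiff_reflect[OF sub] by simp
  from Phi_envelope_subgradient_right[OF der' mono' Phi_envelope_reflect[OF env] sub', of "a - x"] less
  show ?thesis by (simp add: algebra_simps)
qed simp

lemma strictly_convex_deriv_strict_mono:
  fixes \<phi> d :: "real \<Rightarrow> real"
  assumes "convex_on UNIV \<phi>" and "strictly_convex \<phi>"
    and der: "\<And>x. (\<phi> has_real_derivative d x) (at x)"
  shows "strict_mono d"
proof (rule strict_monoI)
  fix x y :: real assume "x < y"
  have tangent: "\<phi> u + d u * (w - u) \<le> \<phi> w" for u w
    using convex_on_imp_above_tangent[OF \<open>convex_on UNIV \<phi>\<close>, of u w "d u"] der[of u] by simp
  define m where "m = (1 - 1 / 2) * x + (1 / 2) * y"
  have "\<phi> m < (\<phi> x + \<phi> y) / 2"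
    using \<open>strictly_convex \<phi>\<close>[unfolded strictly_convex_def, rule_format, of x y "1 / 2"] \<open>x < y\<close>
    unfolding m_def by simp
  moreover have "\<phi> x + \<phi> y - (d y * ((y - x) / 2) - d x * ((y - x) / 2)) \<le> 2 * \<phi> m"
  proof -
    have mx: "m - x = (y - x) / 2" and my: "m - y = - ((y - x) / 2)"
      unfolding m_def by (simp_all add: field_simps)
    have "\<phi> x + d x * ((y - x) / 2) \<le> \<phi> m"
      using tangent[of x m] unfolding mx .
    moreover have "\<phi> y - d y * ((y - x) / 2) \<le> \<phi> m"
      using tangent[of y m] unfolding my by simp
    ultimately show ?thesis by linarith
  qed
  ultimately have "0 < (d y - d x) * ((y - x) / 2)"
    by (simp add: left_diff_distrib)
  with \<open>x < y\<close> show "d x < d y" by (simp add: zero_less_mult_iff)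
qed

lemma standing_phi_deriv:
  assumes "standing_phi \<phi>"
  shows "(\<phi> has_real_derivative deriv \<phi> x) (at x)"
    and "strict_mono (deriv \<phi>)"
    and "deriv \<phi> (deriv (fconj \<phi>) v) = v"
proof -
  have der: "(\<phi> has_real_derivative deriv \<phi> x) (at x)" for x
    using assms unfolding standing_phi_def by (simp add: DERIV_deriv_iff_real_differentiable)
  then show "(\<phi> has_real_derivative deriv \<phi> x) (at x)" .
  show "strict_mono (deriv \<phi>)"
    using assms der by (intro strictly_convex_deriv_strict_mono) (auto simp: standing_phi_def)
  show "deriv \<phi> (deriv (fconj \<phi>) v) = v"
    using assms unfolding standing_phi_def by blast
qed

theorem mainTheorem17:
  fixes \<phi> f :: "real \<Rightarrow> real"
  assumes "standing_phi \<phi>"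
    and "left_Phi_convex \<phi> f"
  shows "a_strongly_convex \<phi> f"
  unfolding a_strongly_convex_def
proof (intro allI impI)
  fix a v x
  assume "v \<in> limiting_subdiff f a"
  then obtain xs vs where xs: "xs \<longlonglongrightarrow> a" and fxs: "(\<lambda>k. f (xs k)) \<longlonglongrightarrow> f a"
    and vs: "vs \<longlonglongrightarrow> v" and sub: "\<And>k. vs k \<in> frechet_subdiff f (xs k)"
    unfolding limiting_subdiff_def by blast
  obtain S where env: "Phi_envelope \<phi> S f"
    using assms(2) by (rule left_Phi_convex_imp_envelope)
  let ?z = "deriv (fconj \<phi>)"
  note deriv = standing_phi_deriv[OF assms(1)]
  have bound: "f (xs k) + \<phi> (x - xs k + ?z (vs k)) - \<phi> (?z (vs k)) \<le> f x" for k
    using Phi_envelope_subgradient[OF deriv(1,2) env] sub[of k] deriv(3) by simp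
  have "(\<lambda>k. f (xs k) + \<phi> (x - xs k + ?z (vs k)) - \<phi> (?z (vs k)))
      \<longlonglongrightarrow> f a + \<phi> (x - a + ?z v) - \<phi> (?z v)"
    by (intro tendsto_intros isCont_tendsto_compose[OF DERIV_isCont[OF deriv(1)]] fxs xs
        tendsto_strict_mono_inverse[OF deriv(2,3) vs])
  then show "f a + \<phi> (x - a + ?z v) - \<phi> (?z v) \<le> f x"
    by (rule LIMSEQ_le_const2) (use bound in blast)
qed

end
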